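(* As $\rho\to\infty$, the outage probability $P_d$ of IRS-OMA is asymptotically given by $$P_d^\infty=\left[-2\frac{\gamma_{th_d}}{\rho\Omega_{sr}\Omega_{rd}}\ln\!\left(\sqrt{\frac{\gamma_{th_d}}{\rho\Omega_{sr}\Omega_{rd}}}\right)\right]^{K}\quad\text{if } Q=1,$$ and $$P_d^\infty=\left[\frac{\gamma_{th_d}}{\rho(Q-1)\Omega_{sr}\Omega_{rd}}\right]^{P}\quad\text{if } Q\ge2,$$ in the sense that $P_d/P_d^\infty\to1$ as $\rho\to\infty$.
   Context: Fix integers $P,Q\ge1$, $K=PQ$, and $\Omega_{sr},\Omega_{rd}>0$. Let $X_{d,1},\dots,X_{d,P}$ be i.i.d., each distributed as $\left|\sum_{k=1}^{Q} g_k h_k\right|^2$ with $g_1,\dots,g_Q,h_1,\dots,h_Q$ independent, $g_k\sim\mathcal{CN}(0,\Omega_{sr})$, $h_k\sim\mathcal{CN}(0,\Omega_{rd})$. The SNR of user $d$ is $\gamma_d=\rho\max_p X_{d,p}$ with transmit SNR $\rho>0$. With $R_{oma}>0$ and $\gamma_{th_d}=2^{R_{oma}}-1$, the outage probability is $P_d=\Pr(\gamma_d\le\gamma_{th_d})$. *)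

theory Defs
  imports "HOL-Probability.Probability"
begin

text \<open>Circularly-symmetric complex Gaussian CN(0,Omega): real and imaginary parts
  independent real Gaussians with mean 0 and variance Omega/2.\<close>
definition cnormal :: "real \<Rightarrow> complex measure" where
  "cnormal \<Omega> = distr
     (density lborel (normal_density 0 (sqrt (\<Omega> / 2))) \<Otimes>\<^sub>M
      density lborel (normal_density 0 (sqrt (\<Omega> / 2))))
     borel (\<lambda>(x, y). Complex x y)"

text \<open>One branch p: the channel vectors (g_1..g_Q) and (h_1..h_Q), all independent.\<close>
definition branch_space :: "nat \<Rightarrow> real \<Rightarrow> real \<Rightarrow> ((nat \<Rightarrow> complex) \<times> (nat \<Rightarrow> complex)) measure" where
  "branch_space Q \<Omega>sr \<Omega>rd =
     PiM {..<Q} (\<lambda>_. cnormal \<Omega>sr) \<Otimes>\<^sub>M PiM {..<Q} (\<lambda>_. cnormal \<Omega>rd)"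

definition irs_space :: "nat \<Rightarrow> nat \<Rightarrow> real \<Rightarrow> real \<Rightarrow>
    (nat \<Rightarrow> (nat \<Rightarrow> complex) \<times> (nat \<Rightarrow> complex)) measure" where
  "irs_space P Q \<Omega>sr \<Omega>rd = PiM {..<P} (\<lambda>_. branch_space Q \<Omega>sr \<Omega>rd)"

definition Xdp :: "nat \<Rightarrow> (nat \<Rightarrow> (nat \<Rightarrow> complex) \<times> (nat \<Rightarrow> complex)) \<Rightarrow> nat \<Rightarrow> real" where
  "Xdp Q \<omega> p = (cmod (\<Sum>k<Q. fst (\<omega> p) k * snd (\<omega> p) k))\<^sup>2"

definition outage :: "nat \<Rightarrow> nat \<Rightarrow> real \<Rightarrow> real \<Rightarrow> real \<Rightarrow> real \<Rightarrow> real" where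
  "outage P Q \<Omega>sr \<Omega>rd \<rho> \<gamma>th =
     measure (irs_space P Q \<Omega>sr \<Omega>rd)
       {\<omega> \<in> space (irs_space P Q \<Omega>sr \<Omega>rd). \<rho> * Max (Xdp Q \<omega> ` {..<P}) \<le> \<gamma>th}"

text \<open>The asymptotic expression P_d^infinity from the paper, K = P Q.\<close>
definition outage_asym :: "nat \<Rightarrow> nat \<Rightarrow> real \<Rightarrow> real \<Rightarrow> real \<Rightarrow> real \<Rightarrow> real" where
  "outage_asym P Q \<Omega>sr \<Omega>rd \<rho> \<gamma>th =
     (if Q = 1 then
        (- 2 * (\<gamma>th / (\<rho> * \<Omega>sr * \<Omega>rd)) * ln (sqrt (\<gamma>th / (\<rho> * \<Omega>sr * \<Omega>rd)))) ^ (P * Q)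
      else (\<gamma>th / (\<rho> * real (Q - 1) * \<Omega>sr * \<Omega>rd)) ^ P)"

end

theory Submission
  imports Defs "HOL-Real_Asymp.Real_Asymp"
begin

(*
  Given the channel vector h, the sum of the g_k h_k is again a circularly-symmetric
  complex Gaussian, of variance Omega_sr ||h||^2: the planar Gaussian density is invariant
  under rotations and stable under convolution.  Its squared modulus is therefore
  exponential, so one branch is in outage at threshold c with probability
  F(c) = E[1 - exp (-c / (Omega_sr ||h||^2))], and independence of the P branches gives
  P_d = F(gamma_th / rho)^P.

  For Q >= 2 the expectation E[1 / ||h||^2] = 1 / (Omega_rd (Q - 1)) is finite, and dominated
  convergence yields F(c) ~ c / (Omega_sr Omega_rd (Q - 1)) as c -> 0.  For Q = 1 it diverges;
  in polar coordinates F(c) = int_0^oo (1 - exp (-T / tau^2)) 2 tau exp (-tau^2) d tau with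
  T = c / (Omega_sr Omega_rd), and elementary bounds on the integrand squeeze this between
  -T ln T - T and -T ln T + 2 T.
*)

section \<open>The circularly-symmetric complex Gaussian\<close>

definition cnormal_density :: "real \<Rightarrow> real \<Rightarrow> real \<Rightarrow> real" where
  "cnormal_density s x y = exp (- (x\<^sup>2 + y\<^sup>2) / s) / (pi * s)"

lemma cnormal_density_nonneg: "s \<ge> 0 \<Longrightarrow> cnormal_density s x y \<ge> 0"
  by (simp add: cnormal_density_def)

lemma borel_measurable_cnormal_density [measurable]:
  assumes [measurable]: "f \<in> borel_measurable M" "g \<in> borel_measurable M"
  shows "(\<lambda>p. cnormal_density s (f p) (g p)) \<in> borel_measurable M"
  unfolding cnormal_density_def by measurable

lemma borel_measurable_Complex [measurable]:
  assumes [measurable]: "f \<in> borel_measurable M" "g \<in> borel_measurable M"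
  shows "(\<lambda>x. Complex (f x) (g x)) \<in> borel_measurable M"
  unfolding Complex_eq by measurable

text \<open>Expectation under \<open>CN(0, s)\<close> written as a planar integral; variance \<open>0\<close> is the
  point mass at \<open>0\<close>, which arises when all coefficients of a linear combination vanish.\<close>
definition cnormal_nn_integral :: "real \<Rightarrow> (complex \<Rightarrow> ennreal) \<Rightarrow> ennreal" where
  "cnormal_nn_integral s \<phi> = (if s = 0 then \<phi> 0 else
     \<integral>\<^sup>+x. \<integral>\<^sup>+y. \<phi> (Complex x y) * ennreal (cnormal_density s x y) \<partial>lborel \<partial>lborel)"

lemma borel_measurable_cnormal_nn_integral [measurable]:
  fixes F :: "complex \<Rightarrow> complex \<Rightarrow> ennreal"
  assumes [measurable]: "case_prod F \<in> borel_measurable (borel \<Otimes>\<^sub>M borel)"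
  shows "(\<lambda>z. cnormal_nn_integral s (F z)) \<in> borel_measurable borel"
  unfolding cnormal_nn_integral_def by (cases "s = 0") simp_all

abbreviation cnormal_marginal_density :: "real \<Rightarrow> real \<Rightarrow> real" where
  "cnormal_marginal_density s x \<equiv> normal_density 0 (sqrt (s / 2)) x"

lemma cnormal_marginal_density_eq:
  "s > 0 \<Longrightarrow> cnormal_marginal_density s x = exp (- x\<^sup>2 / s) / sqrt (pi * s)"
  by (simp add: normal_density_def real_sqrt_divide power_divide real_sqrt_mult)

lemma cnormal_marginal_density_mult:
  "s > 0 \<Longrightarrow> cnormal_marginal_density s x * cnormal_marginal_density s y = cnormal_density s x y"
  by (simp add: cnormal_marginal_density_eq cnormal_density_def mult_exp_exp
      diff_divide_distrib add_divide_distrib)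

lemma prob_space_cnormal_marginal:
  "s > 0 \<Longrightarrow> prob_space (density lborel (cnormal_marginal_density s))"
  by (rule prob_space_normal_density) simp

lemma prob_space_cnormal: "s > 0 \<Longrightarrow> prob_space (cnormal s)"
  unfolding cnormal_def
  by (intro prob_space.prob_space_distr prob_space_pair prob_space_cnormal_marginal) auto

lemma sets_cnormal [measurable_cong]: "sets (cnormal s) = sets borel"
  by (simp add: cnormal_def)

lemma prob_space_PiM_cnormal: "s > 0 \<Longrightarrow> prob_space (PiM I (\<lambda>_. cnormal s))"
  by (intro prob_space_PiM prob_space_cnormal)

lemma nn_integral_cnormal:
  assumes s: "s > 0" and [measurable]: "\<phi> \<in> borel_measurable borel"
  shows "(\<integral>\<^sup>+z. \<phi> z \<partial>cnormal s) = cnormal_nn_integral s \<phi>"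
proof -
  let ?N = "density lborel (cnormal_marginal_density s)"
  interpret N: prob_space ?N using prob_space_cnormal_marginal[OF s] .
  interpret NN: pair_sigma_finite ?N ?N ..
  have "(\<integral>\<^sup>+z. \<phi> z \<partial>cnormal s) = (\<integral>\<^sup>+p. \<phi> (Complex (fst p) (snd p)) \<partial>(?N \<Otimes>\<^sub>M ?N))"
    unfolding cnormal_def by (subst nn_integral_distr) (auto simp: case_prod_beta)
  also have "\<dots> = (\<integral>\<^sup>+x. \<integral>\<^sup>+y. \<phi> (Complex x y) \<partial>?N \<partial>?N)"
    using N.nn_integral_fst[where f = "\<lambda>p. \<phi> (Complex (fst p) (snd p))"] by simp
  also have "\<dots> = (\<integral>\<^sup>+x. \<integral>\<^sup>+y. \<phi> (Complex x y) * ennreal (cnormal_density s x y) \<partial>lborel \<partial>lborel)"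
    by (subst nn_integral_density, measurable, intro nn_integral_cong,
        subst nn_integral_density, measurable, subst nn_integral_cmult[symmetric], measurable)
       (use s in \<open>simp add: cnormal_marginal_density_mult[symmetric] ennreal_mult' mult_ac\<close>)
  finally show ?thesis
    using s by (simp add: cnormal_nn_integral_def)
qed

section \<open>Rotation invariance\<close>

lemma nn_integral_real_affine_inverse:
  fixes g :: "real \<Rightarrow> ennreal"
  assumes [measurable]: "g \<in> borel_measurable borel" and c: "c \<noteq> 0"
  shows "(\<integral>\<^sup>+x. g (t + c * x) \<partial>lborel) = ennreal (1 / \<bar>c\<bar>) * (\<integral>\<^sup>+x. g x \<partial>lborel)"
  using c by (subst nn_integral_real_affine[OF assms, of t])
    (simp add: mult.assoc[symmetric] ennreal_mult[symmetric])

lemma nn_integral_lborel2_mult_imaginary: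
  fixes f :: "real \<Rightarrow> real \<Rightarrow> ennreal"
  assumes [measurable]: "case_prod f \<in> borel_measurable (borel \<Otimes>\<^sub>M borel)" and v: "v \<noteq> 0"
  shows "(\<integral>\<^sup>+x. \<integral>\<^sup>+y. f (- (v * y)) (v * x) \<partial>lborel \<partial>lborel)
     = ennreal (1 / v\<^sup>2) * (\<integral>\<^sup>+x. \<integral>\<^sup>+y. f x y \<partial>lborel \<partial>lborel)"
proof -
  have "(\<integral>\<^sup>+x. \<integral>\<^sup>+y. f (- (v * y)) (v * x) \<partial>lborel \<partial>lborel)
      = (\<integral>\<^sup>+x. ennreal (1 / \<bar>v\<bar>) * \<integral>\<^sup>+z. f z (v * x) \<partial>lborel \<partial>lborel)"
  proof (intro nn_integral_cong)
    fix x
    show "(\<integral>\<^sup>+y. f (- (v * y)) (v * x) \<partial>lborel) = ennreal (1 / \<bar>v\<bar>) * \<integral>\<^sup>+z. f z (v * x) \<partial>lborel"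
      using nn_integral_real_affine_inverse[where g = "\<lambda>z. f z (v * x)" and t = 0 and c = "- v"] v
      by simp
  qed
  also have "\<dots> = ennreal (1 / \<bar>v\<bar>) * (\<integral>\<^sup>+z. \<integral>\<^sup>+x. f z (v * x) \<partial>lborel \<partial>lborel)"
    by (subst nn_integral_cmult, measurable, subst lborel_pair.Fubini', measurable)
  also have "\<dots> = ennreal (1 / \<bar>v\<bar>) * (ennreal (1 / \<bar>v\<bar>) * (\<integral>\<^sup>+z. \<integral>\<^sup>+w. f z w \<partial>lborel \<partial>lborel))"
    using nn_integral_real_affine_inverse[where t = 0 and c = v] v
    by (simp add: nn_integral_cmult)
  finally show ?thesis
    using v by (simp add: mult.assoc[symmetric] ennreal_mult'[symmetric] power2_eq_square
        abs_mult[symmetric])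
qed

text \<open>A shear in \<open>y\<close> followed by a shear in \<open>x\<close>, each a one-dimensional affine substitution.\<close>
lemma nn_integral_lborel2_mult_Re_nonzero:
  fixes f :: "real \<Rightarrow> real \<Rightarrow> ennreal"
  assumes [measurable]: "case_prod f \<in> borel_measurable (borel \<Otimes>\<^sub>M borel)" and u: "u \<noteq> 0"
  shows "(\<integral>\<^sup>+x. \<integral>\<^sup>+y. f (u * x - v * y) (v * x + u * y) \<partial>lborel \<partial>lborel)
     = ennreal (1 / (u\<^sup>2 + v\<^sup>2)) * (\<integral>\<^sup>+x. \<integral>\<^sup>+y. f x y \<partial>lborel \<partial>lborel)"
proof -
  define r where "r = u\<^sup>2 + v\<^sup>2"
  have r: "r > 0"
    using u by (simp add: r_def add_pos_nonneg)
  have "(\<integral>\<^sup>+x. \<integral>\<^sup>+y. f (u * x - v * y) (v * x + u * y) \<partial>lborel \<partial>lborel)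
      = (\<integral>\<^sup>+x. ennreal (1 / \<bar>u\<bar>) * \<integral>\<^sup>+w. f ((r * x - v * w) / u) w \<partial>lborel \<partial>lborel)"
  proof (intro nn_integral_cong)
    fix x
    have "\<And>y. (r * x - v * (v * x + u * y)) / u = u * x - v * y"
      using u by (simp add: r_def field_simps power2_eq_square)
    then show "(\<integral>\<^sup>+y. f (u * x - v * y) (v * x + u * y) \<partial>lborel)
        = ennreal (1 / \<bar>u\<bar>) * \<integral>\<^sup>+w. f ((r * x - v * w) / u) w \<partial>lborel"
      using nn_integral_real_affine_inverse[where g = "\<lambda>w. f ((r * x - v * w) / u) w"
          and t = "v * x" and c = u] u by simp
  qed
  also have "\<dots> = ennreal (1 / \<bar>u\<bar>) * (\<integral>\<^sup>+w. \<integral>\<^sup>+x. f ((r * x - v * w) / u) w \<partial>lborel \<partial>lborel)"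
    by (subst nn_integral_cmult, measurable, subst lborel_pair.Fubini', measurable)
  also have "\<dots> = ennreal (1 / \<bar>u\<bar>) * (ennreal (\<bar>u\<bar> / r) * (\<integral>\<^sup>+w. \<integral>\<^sup>+z. f z w \<partial>lborel \<partial>lborel))"
  proof -
    have "(\<integral>\<^sup>+x. f ((r * x - v * w) / u) w \<partial>lborel) = ennreal (\<bar>u\<bar> / r) * \<integral>\<^sup>+z. f z w \<partial>lborel"
      for w
    proof -
      have "\<And>x. - (v * w) / u + (r / u) * x = (r * x - v * w) / u"
        using u by (simp add: field_simps)
      then show ?thesis
        using nn_integral_real_affine_inverse[where g = "\<lambda>z. f z w" and t = "- (v * w) / u"
            and c = "r / u"] u r by simp
    qed
    then show ?thesis
      by (simp add: nn_integral_cmult)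
  qed
  also have "(\<integral>\<^sup>+w. \<integral>\<^sup>+z. f z w \<partial>lborel \<partial>lborel) = (\<integral>\<^sup>+z. \<integral>\<^sup>+w. f z w \<partial>lborel \<partial>lborel)"
    by (rule lborel_pair.Fubini') measurable
  finally show ?thesis
    using u r by (simp add: mult.assoc[symmetric] ennreal_mult'[symmetric] r_def)
qed

lemma nn_integral_lborel2_mult_complex:
  fixes f :: "complex \<Rightarrow> ennreal"
  assumes [measurable]: "f \<in> borel_measurable borel" and h: "h \<noteq> 0"
  shows "(\<integral>\<^sup>+x. \<integral>\<^sup>+y. f (Complex x y * h) \<partial>lborel \<partial>lborel)
     = ennreal (1 / (cmod h)\<^sup>2) * (\<integral>\<^sup>+x. \<integral>\<^sup>+y. f (Complex x y) \<partial>lborel \<partial>lborel)"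
proof -
  define u v where "u = Re h" and "v = Im h"
  have mult_eq: "Complex x y * h = Complex (u * x - v * y) (v * x + u * y)" for x y
    by (simp add: u_def v_def complex_eq_iff algebra_simps)
  have norm_eq: "(cmod h)\<^sup>2 = u\<^sup>2 + v\<^sup>2"
    by (simp add: u_def v_def cmod_power2)
  have [measurable]: "(\<lambda>(x, y). f (Complex x y)) \<in> borel_measurable (borel \<Otimes>\<^sub>M borel)"
    by measurable
  show ?thesis
  proof (cases "u = 0")
    case True
    then have "v \<noteq> 0"
      using h by (simp add: u_def v_def complex_eq_iff)
    then show ?thesis
      using nn_integral_lborel2_mult_imaginary[where f = "\<lambda>x y. f (Complex x y)"] True
      by (simp add: mult_eq norm_eq)
  next
    case False
    then show ?thesis
      using nn_integral_lborel2_mult_Re_nonzero[where f = "\<lambda>x y. f (Complex x y)"]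
      by (simp add: mult_eq norm_eq)
  qed
qed

lemma cnormal_density_mult_complex:
  assumes s: "s > 0" and h: "h \<noteq> 0"
  shows "cnormal_density s x y = (cmod h)\<^sup>2
     * cnormal_density (s * (cmod h)\<^sup>2) (Re (Complex x y * h)) (Im (Complex x y * h))"
proof -
  have "(Re (Complex x y * h))\<^sup>2 + (Im (Complex x y * h))\<^sup>2 = (cmod h)\<^sup>2 * (x\<^sup>2 + y\<^sup>2)"
    unfolding cmod_power2 by (simp add: power2_eq_square algebra_simps)
  moreover have "(cmod h)\<^sup>2 > 0"
    using h by simp
  ultimately show ?thesis
    using s by (simp add: cnormal_density_def divide_simps)
qed

lemma nn_integral_cnormal_mult:
  assumes s: "s > 0" and [measurable]: "\<phi> \<in> borel_measurable borel"
  shows "(\<integral>\<^sup>+z. \<phi> (z * h) \<partial>cnormal s) = cnormal_nn_integral (s * (cmod h)\<^sup>2) \<phi>"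
proof (cases "h = 0")
  case True
  interpret prob_space "cnormal s"
    using prob_space_cnormal[OF s] .
  show ?thesis
    using True by (simp add: cnormal_nn_integral_def emeasure_space_1)
next
  case False
  define r where "r = (cmod h)\<^sup>2"
  have r: "r > 0"
    using False by (simp add: r_def)
  define F where "F w = ennreal r * (\<phi> w * ennreal (cnormal_density (s * r) (Re w) (Im w)))" for w
  have [measurable]: "F \<in> borel_measurable borel"
    unfolding F_def by measurable
  have "(\<integral>\<^sup>+z. \<phi> (z * h) \<partial>cnormal s) = (\<integral>\<^sup>+x. \<integral>\<^sup>+y. F (Complex x y * h) \<partial>lborel \<partial>lborel)"
    using s r cnormal_density_mult_complex[OF s False]
    by (subst nn_integral_cnormal) (auto simp: cnormal_nn_integral_def F_def r_def ennreal_mult'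
        cnormal_density_nonneg mult_ac intro!: nn_integral_cong)
  also have "\<dots> = ennreal (1 / r) * (\<integral>\<^sup>+x. \<integral>\<^sup>+y. F (Complex x y) \<partial>lborel \<partial>lborel)"
    unfolding r_def by (rule nn_integral_lborel2_mult_complex) (use False in auto)
  also have "(\<integral>\<^sup>+x. \<integral>\<^sup>+y. F (Complex x y) \<partial>lborel \<partial>lborel) = ennreal r * cnormal_nn_integral (s * r) \<phi>"
    unfolding F_def cnormal_nn_integral_def using s r by (simp add: nn_integral_cmult)
  finally show ?thesis
    using r by (simp add: r_def mult.assoc[symmetric] ennreal_mult'[symmetric])
qed

section \<open>Sums of independent complex Gaussians\<close>

lemma nn_integral_normal_convolution:
  assumes s: "s > 0" and t: "t > 0" and [measurable]: "\<psi> \<in> borel_measurable borel"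
  shows "(\<integral>\<^sup>+a. \<integral>\<^sup>+b. \<psi> (a + b)
            * ennreal (cnormal_marginal_density s a * cnormal_marginal_density t b) \<partial>lborel \<partial>lborel)
       = (\<integral>\<^sup>+c. \<psi> c * ennreal (cnormal_marginal_density (s + t) c) \<partial>lborel)"
proof -
  have "(\<integral>\<^sup>+a. \<integral>\<^sup>+b. \<psi> (a + b)
            * ennreal (cnormal_marginal_density s a * cnormal_marginal_density t b) \<partial>lborel \<partial>lborel)
      = (\<integral>\<^sup>+a. \<integral>\<^sup>+c. \<psi> c
            * ennreal (cnormal_marginal_density s a * cnormal_marginal_density t (c - a)) \<partial>lborel \<partial>lborel)"
  proof (rule nn_integral_cong)
    fix a
    show "(\<integral>\<^sup>+b. \<psi> (a + b)
            * ennreal (cnormal_marginal_density s a * cnormal_marginal_density t b) \<partial>lborel)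
        = (\<integral>\<^sup>+c. \<psi> c
            * ennreal (cnormal_marginal_density s a * cnormal_marginal_density t (c - a)) \<partial>lborel)"
      using nn_integral_real_affine[where c = 1 and t = a and f = "\<lambda>c. \<psi> c
            * ennreal (cnormal_marginal_density s a * cnormal_marginal_density t (c - a))"]
      by simp
  qed
  also have "\<dots> = (\<integral>\<^sup>+c. \<psi> c * (\<integral>\<^sup>+a. ennreal (cnormal_marginal_density t (c - a)
            * cnormal_marginal_density s a) \<partial>lborel) \<partial>lborel)"
    by (subst lborel_pair.Fubini', measurable, intro nn_integral_cong, subst nn_integral_cmult[symmetric])
      (auto simp: mult_ac)
  also have "\<dots> = (\<integral>\<^sup>+c. \<psi> c * ennreal (cnormal_marginal_density (s + t) c) \<partial>lborel)"
  proof (intro nn_integral_cong)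
    fix c
    show "\<psi> c * (\<integral>\<^sup>+a. ennreal (cnormal_marginal_density t (c - a)
        * cnormal_marginal_density s a) \<partial>lborel) = \<psi> c * ennreal (cnormal_marginal_density (s + t) c)"
      using conv_normal_density_zero_mean[of "sqrt (t / 2)" "sqrt (s / 2)"] s t
      by (simp add: fun_eq_iff add_divide_distrib add.commute)
  qed
  finally show ?thesis .
qed

text \<open>Both coordinates are convolved separately: the four-fold integral over
  \<open>(x\<^sub>1, y\<^sub>1, x\<^sub>2, y\<^sub>2)\<close> is reordered so that each real convolution is innermost in turn.\<close>
lemma cnormal_nn_integral_convolution:
  assumes s: "s > 0" and t: "t > 0" and [measurable]: "\<phi> \<in> borel_measurable borel"
  shows "cnormal_nn_integral s (\<lambda>w. cnormal_nn_integral t (\<lambda>z. \<phi> (z + w)))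
       = cnormal_nn_integral (s + t) \<phi>"
proof -
  let ?m = cnormal_marginal_density
  define \<Psi> where "\<Psi> X = (\<integral>\<^sup>+c. \<phi> (Complex X c) * ennreal (?m (s + t) c) \<partial>lborel)" for X
  have [measurable]: "\<Psi> \<in> borel_measurable borel"
    unfolding \<Psi>_def by measurable
  have "cnormal_nn_integral s (\<lambda>w. cnormal_nn_integral t (\<lambda>z. \<phi> (z + w))) =
    (\<integral>\<^sup>+x1. \<integral>\<^sup>+y1. \<integral>\<^sup>+x2. \<integral>\<^sup>+y2. \<phi> (Complex (x1 + x2) (y1 + y2))
       * ennreal (?m s x1 * ?m t x2) * ennreal (?m s y1 * ?m t y2) \<partial>lborel \<partial>lborel \<partial>lborel \<partial>lborel)"
    unfolding cnormal_nn_integral_def using s t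
    by (simp, intro nn_integral_cong, subst nn_integral_multc[symmetric], measurable,
        intro nn_integral_cong, subst nn_integral_multc[symmetric], measurable, intro nn_integral_cong)
      (simp add: cnormal_marginal_density_mult[symmetric] ennreal_mult' mult_ac complex_add
        add.commute)
  also have "\<dots> = (\<integral>\<^sup>+x1. \<integral>\<^sup>+x2. \<integral>\<^sup>+y1. \<integral>\<^sup>+y2. \<phi> (Complex (x1 + x2) (y1 + y2))
       * ennreal (?m s x1 * ?m t x2) * ennreal (?m s y1 * ?m t y2) \<partial>lborel \<partial>lborel \<partial>lborel \<partial>lborel)"
    by (intro nn_integral_cong lborel_pair.Fubini') measurable
  also have "\<dots> = (\<integral>\<^sup>+x1. \<integral>\<^sup>+x2. \<Psi> (x1 + x2) * ennreal (?m s x1 * ?m t x2) \<partial>lborel \<partial>lborel)"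
  proof (intro nn_integral_cong)
    fix x1 x2
    have "(\<integral>\<^sup>+y1. \<integral>\<^sup>+y2. \<phi> (Complex (x1 + x2) (y1 + y2)) * ennreal (?m s x1 * ?m t x2)
         * ennreal (?m s y1 * ?m t y2) \<partial>lborel \<partial>lborel)
       = (\<integral>\<^sup>+y1. \<integral>\<^sup>+y2. \<phi> (Complex (x1 + x2) (y1 + y2))
         * ennreal (?m s y1 * ?m t y2) \<partial>lborel \<partial>lborel) * ennreal (?m s x1 * ?m t x2)"
      by (subst nn_integral_multc[symmetric], measurable, intro nn_integral_cong,
          subst nn_integral_multc[symmetric], measurable) (simp add: mult_ac)
    also have "(\<integral>\<^sup>+y1. \<integral>\<^sup>+y2. \<phi> (Complex (x1 + x2) (y1 + y2))
         * ennreal (?m s y1 * ?m t y2) \<partial>lborel \<partial>lborel) = \<Psi> (x1 + x2)"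
      unfolding \<Psi>_def by (rule nn_integral_normal_convolution[OF s t]) measurable
    finally show "(\<integral>\<^sup>+y1. \<integral>\<^sup>+y2. \<phi> (Complex (x1 + x2) (y1 + y2)) * ennreal (?m s x1 * ?m t x2)
         * ennreal (?m s y1 * ?m t y2) \<partial>lborel \<partial>lborel) = \<Psi> (x1 + x2) * ennreal (?m s x1 * ?m t x2)" .
  qed
  also have "\<dots> = (\<integral>\<^sup>+X. \<Psi> X * ennreal (?m (s + t) X) \<partial>lborel)"
    by (rule nn_integral_normal_convolution[OF s t]) measurable
  also have "\<dots> = cnormal_nn_integral (s + t) \<phi>"
    unfolding \<Psi>_def cnormal_nn_integral_def using s t
    by (simp, intro nn_integral_cong, subst nn_integral_multc[symmetric], measurable, intro nn_integral_cong)
      (simp add: cnormal_marginal_density_mult[symmetric] ennreal_mult' mult_ac)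
  finally show ?thesis .
qed

lemma sum_fun_upd_lessThan_Suc:
  "(\<Sum>k<Suc n. (g(n := y)) k * h k) = (\<Sum>k<n. g k * h k) + y * (h n :: 'a :: comm_semiring_1)"
  by simp

lemma nn_integral_cnormal_linear_combination:
  fixes h :: "nat \<Rightarrow> complex"
  assumes s: "s > 0" and \<phi>: "\<phi> \<in> borel_measurable borel"
  shows "(\<integral>\<^sup>+g. \<phi> (\<Sum>k<n. g k * h k) \<partial>PiM {..<n} (\<lambda>_. cnormal s))
     = cnormal_nn_integral (s * (\<Sum>k<n. (cmod (h k))\<^sup>2)) \<phi>"
  using \<phi>
proof (induction n arbitrary: \<phi>)
  case 0
  then show ?case
    by (simp add: PiM_empty cnormal_nn_integral_def)
next
  case (Suc n)
  note [measurable] = Suc.prems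
  interpret product_sigma_finite "\<lambda>_ :: nat. cnormal s"
    unfolding product_sigma_finite_def using prob_space_cnormal[OF s] prob_space_imp_sigma_finite
    by blast
  define S T where "S = s * (\<Sum>k<n. (cmod (h k))\<^sup>2)" and "T = s * (cmod (h n))\<^sup>2"
  have "S \<ge> 0" "T \<ge> 0"
    using s by (auto simp: S_def T_def intro!: sum_nonneg mult_nonneg_nonneg)
  have "(\<integral>\<^sup>+g. \<phi> (\<Sum>k<Suc n. g k * h k) \<partial>PiM {..<Suc n} (\<lambda>_. cnormal s))
     = (\<integral>\<^sup>+y. \<integral>\<^sup>+g. \<phi> (\<Sum>k<Suc n. (g(n := y)) k * h k) \<partial>PiM {..<n} (\<lambda>_. cnormal s) \<partial>cnormal s)"
    unfolding lessThan_Suc by (rule product_nn_integral_insert_rev) auto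
  also have "\<dots> = (\<integral>\<^sup>+y. cnormal_nn_integral S (\<lambda>w. \<phi> (w + y * h n)) \<partial>cnormal s)"
    unfolding sum_fun_upd_lessThan_Suc S_def
    by (intro nn_integral_cong Suc.IH) measurable
  also have "\<dots> = cnormal_nn_integral T (\<lambda>z. cnormal_nn_integral S (\<lambda>w. \<phi> (w + z)))"
    unfolding T_def by (rule nn_integral_cnormal_mult[OF s]) measurable
  also have "\<dots> = cnormal_nn_integral (T + S) \<phi>"
    using \<open>S \<ge> 0\<close> \<open>T \<ge> 0\<close> cnormal_nn_integral_convolution[of T S \<phi>]
    by (cases "S = 0 \<or> T = 0") (auto simp: cnormal_nn_integral_def)
  also have "T + S = s * (\<Sum>k<Suc n. (cmod (h k))\<^sup>2)"
    by (simp add: S_def T_def algebra_simps)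
  finally show ?case .
qed

section \<open>Polar coordinates\<close>

lemma nn_integral_lborel_even:
  fixes f :: "real \<Rightarrow> ennreal"
  assumes [measurable]: "f \<in> borel_measurable borel" and even: "\<And>y. f (- y) = f y"
  shows "(\<integral>\<^sup>+y. f y \<partial>lborel) = 2 * (\<integral>\<^sup>+y. f y * indicator {0<..} y \<partial>lborel)"
proof -
  have "(\<integral>\<^sup>+y. f y \<partial>lborel)
      = (\<integral>\<^sup>+y. f y * indicator {0<..} y + f y * indicator {..<0} y \<partial>lborel)"
    by (rule nn_integral_cong_AE, use AE_lborel_singleton[of 0] in eventually_elim)
       (auto split: split_indicator)
  also have "\<dots> = (\<integral>\<^sup>+y. f y * indicator {0<..} y \<partial>lborel) + (\<integral>\<^sup>+y. f y * indicator {..<0} y \<partial>lborel)"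
    by (rule nn_integral_add) auto
  also have "(\<integral>\<^sup>+y. f y * indicator {..<0} y \<partial>lborel) = (\<integral>\<^sup>+y. f y * indicator {0<..} y \<partial>lborel)"
    using nn_integral_real_affine_inverse[where g = "\<lambda>y. f y * indicator {0<..} y" and t = 0 and c = "- 1"]
    by (simp add: even indicator_def)
  finally show ?thesis
    by (simp add: mult_2)
qed

lemma nn_integral_inverse_one_plus_square:
  "(\<integral>\<^sup>+s. ennreal (1 / (1 + s\<^sup>2)) * indicator {0<..} s \<partial>lborel) = ennreal (pi / 2)"
proof -
  have "(\<integral>\<^sup>+s. ennreal (1 / (1 + s\<^sup>2)) * indicator {0<..} s \<partial>lborel)
      = (\<integral>\<^sup>+s. ennreal (1 / (1 + s\<^sup>2)) * indicator {0..} s \<partial>lborel)"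
    by (rule nn_integral_cong_AE, use AE_lborel_singleton[of 0] in eventually_elim)
       (auto split: split_indicator)
  also have "\<dots> = ennreal (pi / 2 - arctan 0)"
    by (rule nn_integral_FTC_atLeast[OF _ _ _ tendsto_arctan_at_top])
      (auto intro!: derivative_eq_intros simp: add_nonneg_eq_0_iff field_simps power2_eq_square)
  finally show ?thesis
    by simp
qed

text \<open>Substituting \<open>y = x \<sigma>\<close> in the first quadrant.\<close>
lemma nn_integral_quadrant_slopes:
  fixes G :: "real \<Rightarrow> ennreal"
  assumes [measurable]: "G \<in> borel_measurable borel"
  shows "(\<integral>\<^sup>+x. (\<integral>\<^sup>+y. G (x\<^sup>2 + y\<^sup>2) * indicator {0<..} y \<partial>lborel) * indicator {0<..} x \<partial>lborel)
     = (\<integral>\<^sup>+\<sigma>. (\<integral>\<^sup>+x. ennreal x * G (x\<^sup>2 * (1 + \<sigma>\<^sup>2)) * indicator {0<..} x \<partial>lborel)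
          * indicator {0<..} \<sigma> \<partial>lborel)"
proof -
  have "(\<integral>\<^sup>+y. G (x\<^sup>2 + y\<^sup>2) * indicator {0<..} y \<partial>lborel) * indicator {0<..} x
      = (\<integral>\<^sup>+\<sigma>. ennreal x * G (x\<^sup>2 * (1 + \<sigma>\<^sup>2)) * indicator {0<..} \<sigma> * indicator {0<..} x \<partial>lborel)"
    for x :: real
  proof (cases "x > 0")
    case True
    have "(\<integral>\<^sup>+y. G (x\<^sup>2 + y\<^sup>2) * indicator {0<..} y \<partial>lborel)
       = ennreal \<bar>x\<bar> * (\<integral>\<^sup>+\<sigma>. G (x\<^sup>2 + (0 + x * \<sigma>)\<^sup>2) * indicator {0<..} (0 + x * \<sigma>) \<partial>lborel)"
      by (rule nn_integral_real_affine) (use True in auto)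
    also have "\<dots> = (\<integral>\<^sup>+\<sigma>. ennreal x * G (x\<^sup>2 * (1 + \<sigma>\<^sup>2)) * indicator {0<..} \<sigma> \<partial>lborel)"
      using True
      by (subst nn_integral_cmult[symmetric], measurable)
         (auto intro!: nn_integral_cong simp: algebra_simps power2_eq_square zero_less_mult_iff
               split: split_indicator)
    finally show ?thesis
      using True by simp
  qed simp
  then have "(\<integral>\<^sup>+x. (\<integral>\<^sup>+y. G (x\<^sup>2 + y\<^sup>2) * indicator {0<..} y \<partial>lborel) * indicator {0<..} x \<partial>lborel)
     = (\<integral>\<^sup>+x. \<integral>\<^sup>+\<sigma>. ennreal x * G (x\<^sup>2 * (1 + \<sigma>\<^sup>2)) * indicator {0<..} \<sigma> * indicator {0<..} x
          \<partial>lborel \<partial>lborel)"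
    by simp
  also have "\<dots> = (\<integral>\<^sup>+\<sigma>. \<integral>\<^sup>+x. ennreal x * G (x\<^sup>2 * (1 + \<sigma>\<^sup>2)) * indicator {0<..} x
          * indicator {0<..} \<sigma> \<partial>lborel \<partial>lborel)"
    by (subst lborel_pair.Fubini', measurable) (simp add: mult_ac)
  finally show ?thesis
    by (simp add: nn_integral_multc)
qed

lemma nn_integral_radial_rescale:
  fixes G :: "real \<Rightarrow> ennreal"
  assumes [measurable]: "G \<in> borel_measurable borel" and c: "c > 0"
  shows "(\<integral>\<^sup>+x. ennreal x * G (x\<^sup>2 * c\<^sup>2) * indicator {0<..} x \<partial>lborel)
     = ennreal (1 / c\<^sup>2) * (\<integral>\<^sup>+t. ennreal t * G (t\<^sup>2) * indicator {0<..} t \<partial>lborel)"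
proof -
  have "(\<integral>\<^sup>+t. ennreal t * G (t\<^sup>2) * indicator {0<..} t \<partial>lborel)
      = ennreal c * (\<integral>\<^sup>+x. ennreal (c * x) * G ((c * x)\<^sup>2) * indicator {0<..} (c * x) \<partial>lborel)"
    using nn_integral_real_affine[where t = 0 and c = c
        and f = "\<lambda>t. ennreal t * G (t\<^sup>2) * indicator {0<..} t"] c by simp
  also have "\<dots> = ennreal (c\<^sup>2) * (\<integral>\<^sup>+x. ennreal x * G (x\<^sup>2 * c\<^sup>2) * indicator {0<..} x \<partial>lborel)"
    using c
    by (subst (1 2) nn_integral_cmult[symmetric], measurable)
      (auto intro!: nn_integral_cong simp: power2_eq_square ennreal_mult' zero_less_mult_iff mult_ac
        split: split_indicator)
  finally show ?thesis
    using c by (simp add: mult.assoc[symmetric] ennreal_mult'[symmetric])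
qed

lemma nn_integral_lborel2_radial:
  fixes G :: "real \<Rightarrow> ennreal"
  assumes [measurable]: "G \<in> borel_measurable borel"
  shows "(\<integral>\<^sup>+x. \<integral>\<^sup>+y. G (x\<^sup>2 + y\<^sup>2) \<partial>lborel \<partial>lborel)
     = ennreal (2 * pi) * (\<integral>\<^sup>+t. ennreal t * G (t\<^sup>2) * indicator {0<..} t \<partial>lborel)"
proof -
  define K where "K = (\<integral>\<^sup>+t. ennreal t * G (t\<^sup>2) * indicator {0<..} t \<partial>lborel)"
  define Q where "Q = (\<integral>\<^sup>+x. (\<integral>\<^sup>+y. G (x\<^sup>2 + y\<^sup>2) * indicator {0<..} y \<partial>lborel)
    * indicator {0<..} x \<partial>lborel)"
  have rescale: "(\<integral>\<^sup>+x. ennreal x * G (x\<^sup>2 * (1 + \<sigma>\<^sup>2)) * indicator {0<..} x \<partial>lborel)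
      = ennreal (1 / (1 + \<sigma>\<^sup>2)) * K" for \<sigma> :: real
    using nn_integral_radial_rescale[of G "sqrt (1 + \<sigma>\<^sup>2)"] by (simp add: K_def add_pos_nonneg)
  have "(\<integral>\<^sup>+x. \<integral>\<^sup>+y. G (x\<^sup>2 + y\<^sup>2) \<partial>lborel \<partial>lborel)
      = 2 * (\<integral>\<^sup>+x. \<integral>\<^sup>+y. G (x\<^sup>2 + y\<^sup>2) * indicator {0<..} y \<partial>lborel \<partial>lborel)"
    by (subst nn_integral_cmult[symmetric], measurable, rule nn_integral_cong,
        rule nn_integral_lborel_even) auto
  also have "\<dots> = 2 * (2 * Q)"
    unfolding Q_def by (subst nn_integral_lborel_even) auto
  finally have quadrant: "(\<integral>\<^sup>+x. \<integral>\<^sup>+y. G (x\<^sup>2 + y\<^sup>2) \<partial>lborel \<partial>lborel) = 2 * (2 * Q)" .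
  have "Q = (\<integral>\<^sup>+\<sigma>. ennreal (1 / (1 + \<sigma>\<^sup>2)) * indicator {0<..} \<sigma> \<partial>lborel) * K"
    unfolding Q_def nn_integral_quadrant_slopes[OF assms] rescale
    by (subst nn_integral_multc[symmetric], measurable) (auto intro!: nn_integral_cong simp: mult_ac)
  then have "Q = ennreal (pi / 2) * K"
    by (simp only: nn_integral_inverse_one_plus_square)
  then show ?thesis
    unfolding quadrant K_def[symmetric]
    by (simp add: mult.assoc[symmetric] flip: ennreal_mult' ennreal_numeral)
qed

lemma cnormal_nn_integral_radial:
  assumes s: "s > 0" and [measurable]: "\<psi> \<in> borel_measurable borel"
  shows "cnormal_nn_integral s (\<lambda>z. \<psi> ((cmod z)\<^sup>2)) =
    (\<integral>\<^sup>+t. \<psi> (t\<^sup>2) * ennreal (2 * t / s * exp (- t\<^sup>2 / s)) * indicator {0<..} t \<partial>lborel)"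
proof -
  define G where "G r = \<psi> r * ennreal (exp (- r / s) / (pi * s))" for r
  have [measurable]: "G \<in> borel_measurable borel"
    unfolding G_def by measurable
  have "cnormal_nn_integral s (\<lambda>z. \<psi> ((cmod z)\<^sup>2)) = (\<integral>\<^sup>+x. \<integral>\<^sup>+y. G (x\<^sup>2 + y\<^sup>2) \<partial>lborel \<partial>lborel)"
    unfolding cnormal_nn_integral_def G_def cnormal_density_def using s by (simp add: cmod_power2)
  also have "\<dots> = (\<integral>\<^sup>+t. ennreal (2 * pi) * (ennreal t * G (t\<^sup>2) * indicator {0<..} t) \<partial>lborel)"
    by (simp add: nn_integral_lborel2_radial nn_integral_cmult)
  also have "\<dots> = (\<integral>\<^sup>+t. \<psi> (t\<^sup>2) * ennreal (2 * t / s * exp (- t\<^sup>2 / s)) * indicator {0<..} t \<partial>lborel)"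
  proof (rule nn_integral_cong)
    fix t :: real
    have "ennreal (2 * pi) * (ennreal t * G (t\<^sup>2) * indicator {0<..} t) = \<psi> (t\<^sup>2)
        * (ennreal (2 * pi) * (ennreal t * ennreal (exp (- t\<^sup>2 / s) / (pi * s)))) * indicator {0<..} t"
      by (simp add: G_def mult_ac)
    also have "\<dots> = \<psi> (t\<^sup>2) * ennreal (2 * t / s * exp (- t\<^sup>2 / s)) * indicator {0<..} t"
      using s by (cases "t > 0") (simp_all add: ennreal_mult'[symmetric] field_simps)
    finally show "ennreal (2 * pi) * (ennreal t * G (t\<^sup>2) * indicator {0<..} t)
        = \<psi> (t\<^sup>2) * ennreal (2 * t / s * exp (- t\<^sup>2 / s)) * indicator {0<..} t" .
  qed
  finally show ?thesis .
qed

lemma cnormal_nn_integral_cmod_le: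
  assumes s: "s > 0" and c: "c \<ge> 0"
  shows "cnormal_nn_integral s (indicator {z. (cmod z)\<^sup>2 \<le> c}) = ennreal (1 - exp (- c / s))"
proof -
  have "cnormal_nn_integral s (indicator {z. (cmod z)\<^sup>2 \<le> c})
      = cnormal_nn_integral s (\<lambda>z. indicator {..c} ((cmod z)\<^sup>2))"
    by (rule arg_cong[where f = "cnormal_nn_integral s"]) (auto simp: indicator_def)
  also have "\<dots> = (\<integral>\<^sup>+t. ennreal (2 * t / s * exp (- t\<^sup>2 / s)) * indicator {0..sqrt c} t \<partial>lborel)"
  proof (subst cnormal_nn_integral_radial[OF s], measurable, rule nn_integral_cong)
    fix t :: real
    have "0 < t \<Longrightarrow> t\<^sup>2 \<le> c \<longleftrightarrow> t \<le> sqrt c"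
      using c real_le_rsqrt real_sqrt_le_iff by fastforce
    then show "indicator {..c} (t\<^sup>2) * ennreal (2 * t / s * exp (- t\<^sup>2 / s)) * indicator {0<..} t
        = ennreal (2 * t / s * exp (- t\<^sup>2 / s)) * indicator {0..sqrt c} t"
      by (cases "t > 0"; cases "t = 0") (auto simp: indicator_def)
  qed
  also have "\<dots> = ennreal (- exp (- (sqrt c)\<^sup>2 / s) - (- exp (- 0\<^sup>2 / s)))"
  proof (rule nn_integral_FTC_Icc)
    fix t
    assume "t \<in> {0..sqrt c}"
    then show "((\<lambda>t. - exp (- t\<^sup>2 / s)) has_real_derivative 2 * t / s * exp (- t\<^sup>2 / s)) (at t)"
        and "0 \<le> 2 * t / s * exp (- t\<^sup>2 / s)"
      using s by (auto intro!: derivative_eq_intros simp: field_simps)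
  qed (use c in auto)
  finally show ?thesis
    using c by simp
qed

lemma cnormal_nn_integral_exp:
  assumes s: "s > 0" and l: "l \<ge> 0"
  shows "cnormal_nn_integral s (\<lambda>z. ennreal (exp (- l * (cmod z)\<^sup>2))) = ennreal (1 / (1 + l * s))"
proof -
  define \<mu> where "\<mu> = l + 1 / s"
  have \<mu>: "\<mu> > 0"
    using s l by (simp add: \<mu>_def add_nonneg_pos)
  have s_\<mu>: "s * \<mu> = 1 + l * s"
    using s by (simp add: \<mu>_def field_simps)
  have "cnormal_nn_integral s (\<lambda>z. ennreal (exp (- l * (cmod z)\<^sup>2)))
      = (\<integral>\<^sup>+t. ennreal (2 * t / s * exp (- \<mu> * t\<^sup>2)) * indicator {0..} t \<partial>lborel)"
  proof (subst cnormal_nn_integral_radial[OF s], measurable, rule nn_integral_cong)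
    fix t :: real
    have "exp (- l * t\<^sup>2) * (2 * t / s * exp (- t\<^sup>2 / s)) = 2 * t / s * exp (- \<mu> * t\<^sup>2)"
      by (simp add: \<mu>_def mult_exp_exp algebra_simps diff_divide_distrib)
    then show "ennreal (exp (- l * t\<^sup>2)) * ennreal (2 * t / s * exp (- t\<^sup>2 / s)) * indicator {0<..} t
        = ennreal (2 * t / s * exp (- \<mu> * t\<^sup>2)) * indicator {0..} t"
      using s by (cases "t > 0"; cases "t = 0") (auto simp: indicator_def ennreal_mult'[symmetric])
  qed
  also have "\<dots> = ennreal (0 - (- 1 / (s * \<mu>) * exp (- \<mu> * 0\<^sup>2)))"
  proof (rule nn_integral_FTC_atLeast)
    fix t :: real
    show "((\<lambda>t. - 1 / (s * \<mu>) * exp (- \<mu> * t\<^sup>2)) has_real_derivative 2 * t / s * exp (- \<mu> * t\<^sup>2)) (at t)"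
      using s \<mu> by (auto intro!: derivative_eq_intros simp: field_simps)
    show "0 \<le> t \<Longrightarrow> 0 \<le> 2 * t / s * exp (- \<mu> * t\<^sup>2)"
      using s by auto
    show "((\<lambda>t. - 1 / (s * \<mu>) * exp (- \<mu> * t\<^sup>2)) \<longlongrightarrow> 0) at_top"
      using \<mu> by real_asymp
  qed measurable
  finally show ?thesis
    using s_\<mu> by simp
qed

lemma AE_cnormal_nonzero:
  assumes s: "s > 0"
  shows "AE z in cnormal s. z \<noteq> 0"
proof (rule AE_I')
  have "emeasure (cnormal s) {0} = cnormal_nn_integral s (indicator {z. (cmod z)\<^sup>2 \<le> 0})"
    by (simp flip: nn_integral_cnormal[OF s] nn_integral_indicator add: sets_cnormal)
  then show "{0} \<in> null_sets (cnormal s)"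
    using cnormal_nn_integral_cmod_le[OF s, of 0] by (simp add: null_sets_def sets_cnormal)
qed auto

section \<open>The outage probability of one branch\<close>

definition sq_norm :: "nat \<Rightarrow> (nat \<Rightarrow> complex) \<Rightarrow> real" where
  "sq_norm Q h = (\<Sum>k<Q. (cmod (h k))\<^sup>2)"

lemma sq_norm_nonneg: "sq_norm Q h \<ge> 0"
  unfolding sq_norm_def by (auto intro!: sum_nonneg)

lemma borel_measurable_sq_norm [measurable]:
  assumes [measurable]: "f \<in> measurable N (PiM {..<Q} (\<lambda>_. cnormal b))"
  shows "(\<lambda>x. sq_norm Q (f x)) \<in> borel_measurable N"
  unfolding sq_norm_def
proof (rule borel_measurable_sum)
  fix k
  assume "k \<in> {..<Q}"
  then have "(\<lambda>x. f x k) \<in> measurable N (cnormal b)"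
    by (intro measurable_compose[OF assms measurable_component_singleton]) simp
  then show "(\<lambda>x. (cmod (f x k))\<^sup>2) \<in> borel_measurable N"
    by (simp add: measurable_cong_sets[OF refl sets_cnormal])
qed

lemma AE_sq_norm_pos:
  assumes Q: "Q \<ge> 1" and b: "b > 0"
  shows "AE h in PiM {..<Q} (\<lambda>_. cnormal b). sq_norm Q h > 0"
proof -
  have "AE h in PiM {..<Q} (\<lambda>_. cnormal b). h 0 \<noteq> 0"
    using Q by (intro AE_PiM_component prob_space_cnormal b AE_cnormal_nonzero) auto
  then show ?thesis
  proof eventually_elim
    case (elim h)
    have "(cmod (h 0))\<^sup>2 \<le> sq_norm Q h"
      unfolding sq_norm_def using Q by (intro member_le_sum) auto
    then show ?case
      using elim by (smt (verit) zero_less_power2 norm_eq_zero)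
  qed
qed

definition branch_cdf :: "nat \<Rightarrow> real \<Rightarrow> real \<Rightarrow> real \<Rightarrow> real" where
  "branch_cdf Q \<Omega>sr \<Omega>rd c = measure (branch_space Q \<Omega>sr \<Omega>rd)
     {x \<in> space (branch_space Q \<Omega>sr \<Omega>rd). (cmod (\<Sum>k<Q. fst x k * snd x k))\<^sup>2 \<le> c}"

lemma prob_space_branch_space: "a > 0 \<Longrightarrow> b > 0 \<Longrightarrow> prob_space (branch_space Q a b)"
  unfolding branch_space_def by (intro prob_space_pair prob_space_PiM_cnormal)

text \<open>Given \<open>h\<close>, the sum \<open>\<Sum>\<^sub>k g\<^sub>k h\<^sub>k\<close> is \<open>CN(0, a \<parallel>h\<parallel>\<^sup>2)\<close>.\<close>
lemma emeasure_branch_le: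
  assumes Q: "Q \<ge> 1" and a: "a > 0" and b: "b > 0" and c: "c \<ge> 0"
  shows "emeasure (branch_space Q a b)
      {x \<in> space (branch_space Q a b). (cmod (\<Sum>k<Q. fst x k * snd x k))\<^sup>2 \<le> c}
     = (\<integral>\<^sup>+h. ennreal (1 - exp (- c / (a * sq_norm Q h))) \<partial>PiM {..<Q} (\<lambda>_. cnormal b))"
proof -
  let ?A = "PiM {..<Q} (\<lambda>_. cnormal a)"
  let ?B = "PiM {..<Q} (\<lambda>_. cnormal b)"
  let ?D = "{z. (cmod z)\<^sup>2 \<le> c}"
  interpret A: prob_space ?A using prob_space_PiM_cnormal[OF a] .
  interpret B: prob_space ?B using prob_space_PiM_cnormal[OF b] .
  interpret AB: pair_sigma_finite ?A ?B ..
  define E where "E = {x \<in> space (?A \<Otimes>\<^sub>M ?B). (cmod (\<Sum>k<Q. fst x k * snd x k))\<^sup>2 \<le> c}"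
  have [measurable]: "E \<in> sets (?A \<Otimes>\<^sub>M ?B)"
    unfolding E_def by measurable
  have "emeasure (branch_space Q a b)
      {x \<in> space (branch_space Q a b). (cmod (\<Sum>k<Q. fst x k * snd x k))\<^sup>2 \<le> c}
      = (\<integral>\<^sup>+h. \<integral>\<^sup>+g. indicator E (g, h) \<partial>?A \<partial>?B)"
    by (simp add: branch_space_def E_def AB.nn_integral_snd flip: nn_integral_indicator)
  also have "\<dots> = (\<integral>\<^sup>+h. cnormal_nn_integral (a * sq_norm Q h) (indicator ?D) \<partial>?B)"
  proof (rule nn_integral_cong)
    fix h
    assume "h \<in> space ?B"
    then have "(\<integral>\<^sup>+g. indicator E (g, h) \<partial>?A) = (\<integral>\<^sup>+g. indicator ?D (\<Sum>k<Q. g k * h k) \<partial>?A)"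
      by (intro nn_integral_cong) (auto simp: E_def indicator_def space_pair_measure)
    then show "(\<integral>\<^sup>+g. indicator E (g, h) \<partial>?A) = cnormal_nn_integral (a * sq_norm Q h) (indicator ?D)"
      unfolding sq_norm_def using nn_integral_cnormal_linear_combination[OF a] by simp
  qed
  also have "\<dots> = (\<integral>\<^sup>+h. ennreal (1 - exp (- c / (a * sq_norm Q h))) \<partial>?B)"
    using AE_sq_norm_pos[OF Q b]
    by (intro nn_integral_cong_AE, eventually_elim) (simp add: cnormal_nn_integral_cmod_le a c)
  finally show ?thesis .
qed

lemma one_minus_exp_neg_bounds: "x \<ge> 0 \<Longrightarrow> 0 \<le> 1 - exp (- x) \<and> 1 - exp (- x) \<le> (x :: real)"
  using exp_ge_add_one_self[of "- x"] by auto

lemma branch_cdf_eq_integral: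
  assumes Q: "Q \<ge> 1" and a: "a > 0" and b: "b > 0" and c: "c \<ge> 0"
  shows "branch_cdf Q a b c = (\<integral>h. 1 - exp (- c / (a * sq_norm Q h)) \<partial>PiM {..<Q} (\<lambda>_. cnormal b))"
proof -
  have "0 \<le> 1 - exp (- c / (a * sq_norm Q h))" for h
    using one_minus_exp_neg_bounds[of "c / (a * sq_norm Q h)"] a c sq_norm_nonneg[of Q h] by simp
  then show ?thesis
    unfolding branch_cdf_def measure_def emeasure_branch_le[OF assms]
    by (subst integral_eq_nn_integral) auto
qed

text \<open>The \<open>P\<close> branches are independent, and \<open>\<rho> max\<^sub>p X\<^sub>p \<le> \<gamma>\<close> iff every \<open>X\<^sub>p \<le> \<gamma> / \<rho>\<close>.\<close>
lemma outage_eq_branch_cdf_power: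
  assumes P: "P \<ge> 1" and a: "a > 0" and b: "b > 0" and \<rho>: "\<rho> > 0"
  shows "outage P Q a b \<rho> \<gamma> = branch_cdf Q a b (\<gamma> / \<rho>) ^ P"
proof -
  let ?M = "branch_space Q a b"
  define E where "E = {x \<in> space ?M. (cmod (\<Sum>k<Q. fst x k * snd x k))\<^sup>2 \<le> \<gamma> / \<rho>}"
  interpret M: prob_space ?M using prob_space_branch_space[OF a b] .
  interpret product_sigma_finite "\<lambda>_ :: nat. ?M"
    unfolding product_sigma_finite_def using M.sigma_finite_measure_axioms by blast
  have [measurable]: "E \<in> sets ?M"
    unfolding E_def branch_space_def by measurable
  have "\<rho> * Max (Xdp Q \<omega> ` {..<P}) \<le> \<gamma> \<longleftrightarrow> Max (Xdp Q \<omega> ` {..<P}) \<le> \<gamma> / \<rho>" for \<omega>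
    using \<rho> by (simp add: field_simps)
  moreover have "Max (Xdp Q \<omega> ` {..<P}) \<le> \<gamma> / \<rho> \<longleftrightarrow> (\<forall>p<P. Xdp Q \<omega> p \<le> \<gamma> / \<rho>)" for \<omega>
    using P by (subst Max_le_iff) (auto simp: lessThan_empty_iff)
  ultimately have "\<rho> * Max (Xdp Q \<omega> ` {..<P}) \<le> \<gamma> \<longleftrightarrow> (\<forall>p<P. Xdp Q \<omega> p \<le> \<gamma> / \<rho>)" for \<omega>
    by blast
  then have "{\<omega> \<in> space (irs_space P Q a b). \<rho> * Max (Xdp Q \<omega> ` {..<P}) \<le> \<gamma>} = PiE {..<P} (\<lambda>_. E)"
    by (auto simp: irs_space_def space_PiM E_def Xdp_def PiE_iff extensional_def)
  moreover have "emeasure (irs_space P Q a b) (PiE {..<P} (\<lambda>_. E)) = ennreal (measure ?M E ^ P)"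
    unfolding irs_space_def
    by (subst emeasure_PiM) (auto simp: M.emeasure_eq_measure ennreal_power)
  ultimately show ?thesis
    by (simp add: outage_def measure_def branch_cdf_def E_def)
qed

section \<open>Several elements per branch\<close>

lemma nn_integral_exp_neg_mult:
  assumes S: "S > 0"
  shows "(\<integral>\<^sup>+l. ennreal (exp (- l * S)) * indicator {0..} l \<partial>lborel) = ennreal (1 / S)"
proof -
  have "(\<integral>\<^sup>+l. ennreal (exp (- l * S)) * indicator {0..} l \<partial>lborel) = ennreal (0 - (- exp (- 0 * S) / S))"
  proof (rule nn_integral_FTC_atLeast)
    show "((\<lambda>l. - exp (- l * S) / S) has_real_derivative exp (- l * S)) (at l)" for l
      using S by (auto intro!: derivative_eq_intros simp: field_simps)
    show "((\<lambda>l. - exp (- l * S) / S) \<longlongrightarrow> 0) at_top"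
      using S by real_asymp
  qed auto
  then show ?thesis
    by simp
qed

lemma nn_integral_exp_sq_norm:
  assumes a: "a > 0" and b: "b > 0" and l: "l \<ge> 0"
  shows "(\<integral>\<^sup>+h. ennreal (exp (- l * (a * sq_norm Q h))) \<partial>PiM {..<Q} (\<lambda>_. cnormal b))
     = ennreal ((1 / (1 + l * a * b)) ^ Q)"
proof -
  interpret product_sigma_finite "\<lambda>_ :: nat. cnormal b"
    unfolding product_sigma_finite_def using prob_space_cnormal[OF b] prob_space_imp_sigma_finite
    by blast
  have "exp (- l * (a * sq_norm Q h)) = exp (\<Sum>k<Q. - (l * a) * (cmod (h k))\<^sup>2)" for h
    by (simp add: sq_norm_def sum_distrib_left sum_negf mult_ac)
  then have "(\<integral>\<^sup>+h. ennreal (exp (- l * (a * sq_norm Q h))) \<partial>PiM {..<Q} (\<lambda>_. cnormal b))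
      = (\<integral>\<^sup>+h. (\<Prod>k<Q. ennreal (exp (- (l * a) * (cmod (h k))\<^sup>2))) \<partial>PiM {..<Q} (\<lambda>_. cnormal b))"
    by (simp add: exp_sum prod_ennreal)
  also have "\<dots> = (\<Prod>k<Q. \<integral>\<^sup>+z. ennreal (exp (- (l * a) * (cmod z)\<^sup>2)) \<partial>cnormal b)"
    by (rule product_nn_integral_prod) auto
  also have "\<dots> = (\<Prod>k<Q. ennreal (1 / (1 + l * a * b)))"
    using cnormal_nn_integral_exp[OF b, of "l * a"] a l
    by (subst nn_integral_cnormal[OF b]) (auto simp: mult_ac)
  finally show ?thesis
    using a b l by (simp add: ennreal_power)
qed

lemma DERIV_inverse_one_plus_mult_power:
  fixes K x :: real
  assumes K: "K > 0" and x: "x \<ge> 0"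
  shows "((\<lambda>x. - 1 / (K * (real m + 1)) * (1 / (1 + x * K)) ^ (m + 1))
    has_real_derivative (1 / (1 + x * K)) ^ (m + 2)) (at x)"
proof -
  have u: "1 + x * K > 0"
    using K x by (simp add: add_pos_nonneg)
  have "((\<lambda>x. 1 / (1 + x * K)) has_real_derivative (- K / (1 + x * K)\<^sup>2)) (at x)"
    using u by (auto intro!: derivative_eq_intros simp: power2_eq_square)
  from DERIV_cmult[OF DERIV_power_Suc[OF this, of m], of "- 1 / (K * (real m + 1))"]
  have "((\<lambda>x. - 1 / (K * (real m + 1)) * (1 / (1 + x * K)) ^ (m + 1)) has_real_derivative
      - 1 / (K * (real m + 1)) * ((1 + real m) * ((1 / (1 + x * K)) ^ m * (- K / (1 + x * K)\<^sup>2))))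
      (at x)"
    by simp
  moreover have "- 1 / (K * (real m + 1)) * ((1 + real m) * ((1 / (1 + x * K)) ^ m * (- K / (1 + x * K)\<^sup>2)))
      = (1 / (1 + x * K)) ^ (m + 2)"
    using u K by (simp add: field_simps power2_eq_square add_nonneg_eq_0_iff)
  ultimately show ?thesis
    by simp
qed

text \<open>Writing \<open>1 / x = \<integral>\<^sub>0\<^sup>\<infinity> e\<^sup>-\<^sup>l\<^sup>x dl\<close> and swapping the integrals leaves
  \<open>\<integral>\<^sub>0\<^sup>\<infinity> (1 + l a b)\<^sup>-\<^sup>Q dl\<close>, which is finite exactly when \<open>Q \<ge> 2\<close>.\<close>
lemma nn_integral_inverse_sq_norm:
  assumes Q: "Q \<ge> 2" and a: "a > 0" and b: "b > 0"
  shows "(\<integral>\<^sup>+h. ennreal (1 / (a * sq_norm Q h)) \<partial>PiM {..<Q} (\<lambda>_. cnormal b))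
       = ennreal (1 / (a * b * real (Q - 1)))"
proof -
  let ?B = "PiM {..<Q} (\<lambda>_. cnormal b)"
  interpret B: prob_space ?B using prob_space_PiM_cnormal[OF b] .
  interpret BL: pair_sigma_finite ?B lborel ..
  define m where "m = Q - 2"
  have Q_eq: "Q = m + 2" and Q1: "Q \<ge> 1"
    using Q by (simp_all add: m_def)
  have "(\<integral>\<^sup>+h. ennreal (1 / (a * sq_norm Q h)) \<partial>?B) =
     (\<integral>\<^sup>+h. \<integral>\<^sup>+l. ennreal (exp (- l * (a * sq_norm Q h))) * indicator {0..} l \<partial>lborel \<partial>?B)"
    using AE_sq_norm_pos[OF Q1 b]
  proof (intro nn_integral_cong_AE, eventually_elim)
    case (elim h)
    then show ?case
      using nn_integral_exp_neg_mult[of "a * sq_norm Q h"] a by simp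
  qed
  also have "\<dots> = (\<integral>\<^sup>+l. \<integral>\<^sup>+h. ennreal (exp (- l * (a * sq_norm Q h))) * indicator {0..} l \<partial>?B \<partial>lborel)"
    by (rule BL.Fubini'[symmetric]) measurable
  also have "\<dots> = (\<integral>\<^sup>+l. ennreal ((1 / (1 + l * (a * b))) ^ Q) * indicator {0..} l \<partial>lborel)"
    using nn_integral_exp_sq_norm[OF a b]
    by (intro nn_integral_cong) (auto simp: nn_integral_multc mult_ac split: split_indicator)
  also have "\<dots> = ennreal (0 - (- 1 / ((a * b) * (real m + 1)) * (1 / (1 + 0 * (a * b))) ^ (m + 1)))"
  proof (rule nn_integral_FTC_atLeast)
    show "((\<lambda>x. - 1 / ((a * b) * (real m + 1)) * (1 / (1 + x * (a * b))) ^ (m + 1))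
      has_real_derivative (1 / (1 + l * (a * b))) ^ Q) (at l)" if "0 \<le> l" for l
      unfolding Q_eq using DERIV_inverse_one_plus_mult_power[of "a * b" l m] a b that by simp
    show "((\<lambda>x. - 1 / ((a * b) * (real m + 1)) * (1 / (1 + x * (a * b))) ^ (m + 1)) \<longlongrightarrow> 0) at_top"
      using a b by real_asymp
  qed (use a b in auto)
  also have "\<dots> = ennreal (1 / (a * b * real (Q - 1)))"
    by (simp add: Q_eq mult_ac add.commute)
  finally show ?thesis .
qed

text \<open>Both sides vanish when \<open>K = 0\<close>, since \<open>x / 0 = 0\<close>.\<close>
lemma mult_one_minus_exp_bounds:
  fixes t K :: real
  assumes t: "t > 0" and K: "K \<ge> 0"
  shows "0 \<le> t * (1 - exp (- 1 / (t * K)))" and "t * (1 - exp (- 1 / (t * K))) \<le> 1 / K"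
proof -
  have "0 \<le> 1 - exp (- (1 / (t * K)))" and le: "1 - exp (- (1 / (t * K))) \<le> 1 / (t * K)"
    using one_minus_exp_neg_bounds[of "1 / (t * K)"] t K by auto
  then show "0 \<le> t * (1 - exp (- 1 / (t * K)))"
    using t by simp
  have "t * (1 - exp (- 1 / (t * K))) \<le> t * (1 / (t * K))"
    using le t by (intro mult_left_mono) auto
  then show "t * (1 - exp (- 1 / (t * K))) \<le> 1 / K"
    using t by simp
qed

lemma tendsto_mult_one_minus_exp:
  fixes K :: real
  assumes "K > 0"
  shows "((\<lambda>t. t * (1 - exp (- 1 / (t * K)))) \<longlongrightarrow> 1 / K) at_top"
proof -
  have "((\<lambda>t. t * (1 - exp (- 1 / (t * K)))) \<longlongrightarrow> inverse K) at_top"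
    using assms by real_asymp
  then show ?thesis
    by (simp add: inverse_eq_divide)
qed

text \<open>Dominated convergence, with \<open>1 / (a \<parallel>h\<parallel>\<^sup>2)\<close> as the integrable majorant.\<close>
lemma branch_cdf_asymptotic_Q_ge2:
  assumes Q: "Q \<ge> 2" and a: "a > 0" and b: "b > 0"
  shows "((\<lambda>t. t * branch_cdf Q a b (1 / t)) \<longlongrightarrow> 1 / (a * b * real (Q - 1))) at_top"
proof -
  let ?B = "PiM {..<Q} (\<lambda>_. cnormal b)"
  interpret B: prob_space ?B using prob_space_PiM_cnormal[OF b] .
  have Q1: "Q \<ge> 1"
    using Q by simp
  define s where "s t h = t * (1 - exp (- 1 / (t * (a * sq_norm Q h))))" for t h
  define w where "w h = 1 / (a * sq_norm Q h)" for h
  have [measurable]: "w \<in> borel_measurable ?B" "s t \<in> borel_measurable ?B" for t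
    unfolding w_def s_def by measurable
  have w_nonneg: "0 \<le> w h" for h
    unfolding w_def using a sq_norm_nonneg[of Q h] by simp
  have nn_integral_w: "(\<integral>\<^sup>+h. ennreal (w h) \<partial>?B) = ennreal (1 / (a * b * real (Q - 1)))"
    unfolding w_def by (rule nn_integral_inverse_sq_norm[OF Q a b])
  have "integrable ?B w"
    by (rule integrableI_nn_integral_finite[OF _ _ nn_integral_w]) (auto simp: w_nonneg)
  moreover have "AE h in ?B. ((\<lambda>t. s t h) \<longlongrightarrow> w h) at_top"
    using AE_sq_norm_pos[OF Q1 b]
  proof eventually_elim
    case (elim h)
    then show ?case
      unfolding s_def w_def using tendsto_mult_one_minus_exp[of "a * sq_norm Q h"] a by simp
  qed
  moreover have "\<forall>\<^sub>F t in at_top. AE h in ?B. norm (s t h) \<le> w h"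
    using eventually_gt_at_top[of "0 :: real"]
    by eventually_elim (use a sq_norm_nonneg mult_one_minus_exp_bounds in \<open>auto simp: s_def w_def\<close>)
  ultimately have "((\<lambda>t. \<integral>h. s t h \<partial>?B) \<longlongrightarrow> \<integral>h. w h \<partial>?B) at_top"
    by (intro integral_dominated_convergence_at_top) measurable
  moreover have "(\<integral>h. w h \<partial>?B) = 1 / (a * b * real (Q - 1))"
    using a b by (subst integral_eq_nn_integral) (auto simp: w_nonneg nn_integral_w)
  moreover have "\<forall>\<^sub>F t in at_top. (\<integral>h. s t h \<partial>?B) = t * branch_cdf Q a b (1 / t)"
    using eventually_gt_at_top[of "0 :: real"]
  proof eventually_elim
    case (elim t)
    then show ?case
      using Q a b by (simp add: branch_cdf_eq_integral s_def field_simps flip: integral_mult_right_zero)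
  qed
  ultimately show ?thesis
    by (simp add: tendsto_cong)
qed

section \<open>A single element per branch\<close>

text \<open>\<open>Pr(|g h|\<^sup>2 \<le> T)\<close> for independent \<open>g, h \<sim> CN(0, 1)\<close>, integrated over \<open>\<tau> = |h|\<close>.\<close>
definition unit_product_cdf :: "real \<Rightarrow> ennreal" where
  "unit_product_cdf T = (\<integral>\<^sup>+\<tau>. ennreal ((1 - exp (- T / \<tau>\<^sup>2)) * (2 * \<tau> * exp (- \<tau>\<^sup>2)))
     * indicator {0<..} \<tau> \<partial>lborel)"

lemma emeasure_branch_1_le:
  assumes a: "a > 0" and b: "b > 0" and c: "c \<ge> 0"
  shows "emeasure (branch_space 1 a b)
      {x \<in> space (branch_space 1 a b). (cmod (\<Sum>k<1. fst x k * snd x k))\<^sup>2 \<le> c}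
    = unit_product_cdf (c / (a * b))"
proof -
  define \<psi> where "\<psi> r = ennreal (1 - exp (- c / (a * r)))" for r
  have [measurable]: "\<psi> \<in> borel_measurable borel"
    unfolding \<psi>_def by measurable
  have "emeasure (branch_space 1 a b)
      {x \<in> space (branch_space 1 a b). (cmod (\<Sum>k<1. fst x k * snd x k))\<^sup>2 \<le> c}
      = (\<integral>\<^sup>+h. \<psi> ((cmod (h 0))\<^sup>2) \<partial>PiM {..<1 :: nat} (\<lambda>_. cnormal b))"
    using emeasure_branch_le[of 1, OF _ a b c] by (simp add: sq_norm_def \<psi>_def)
  also have "\<dots> = cnormal_nn_integral b (\<lambda>z. \<psi> ((cmod z)\<^sup>2))"
    using nn_integral_cnormal_linear_combination[OF b, of "\<lambda>z. \<psi> ((cmod z)\<^sup>2)" 1 "\<lambda>_. 1"]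
    by (simp add: lessThan_Suc)
  also have "\<dots> = (\<integral>\<^sup>+z. \<psi> ((cmod (z * sqrt b))\<^sup>2) \<partial>cnormal 1)"
    using nn_integral_cnormal_mult[of 1 "\<lambda>z. \<psi> ((cmod z)\<^sup>2)" "sqrt b"] b by simp
  also have "\<dots> = cnormal_nn_integral 1 (\<lambda>z. \<psi> (b * (cmod z)\<^sup>2))"
    using b by (subst nn_integral_cnormal) (simp_all add: norm_mult power_mult_distrib mult_ac)
  also have "\<dots> = unit_product_cdf (c / (a * b))"
    unfolding unit_product_cdf_def
  proof (subst cnormal_nn_integral_radial, simp, measurable, rule nn_integral_cong)
    fix \<tau> :: real
    have "- c / (a * (b * \<tau>\<^sup>2)) = - (c / (a * b)) / \<tau>\<^sup>2"
      by simp
    moreover have "0 \<le> 1 - exp (- (c / (a * b)) / \<tau>\<^sup>2)"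
      using a b c by simp
    ultimately show "\<psi> (b * \<tau>\<^sup>2) * ennreal (2 * \<tau> / 1 * exp (- \<tau>\<^sup>2 / 1)) * indicator {0<..} \<tau>
        = ennreal ((1 - exp (- (c / (a * b)) / \<tau>\<^sup>2)) * (2 * \<tau> * exp (- \<tau>\<^sup>2))) * indicator {0<..} \<tau>"
      by (simp add: \<psi>_def ennreal_mult' mult.assoc)
  qed
  finally show ?thesis .
qed

lemma unit_product_cdf_integrand_le:
  fixes T \<tau> :: real
  assumes T: "0 < T" "T \<le> 1"
  shows "ennreal ((1 - exp (- T / \<tau>\<^sup>2)) * (2 * \<tau> * exp (- \<tau>\<^sup>2))) * indicator {0<..} \<tau> \<le>
    ennreal (2 * \<tau>) * indicator {0..sqrt T} \<tau> + ennreal (2 * T / \<tau>) * indicator {sqrt T..1} \<tau>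
    + ennreal (2 * T * \<tau> * exp (- \<tau>\<^sup>2)) * indicator {1..} \<tau>"
proof (cases "\<tau> > 0")
  case True
  define x where "x = T / \<tau>\<^sup>2"
  have x: "0 \<le> 1 - exp (- x)" "1 - exp (- x) \<le> 1" "1 - exp (- x) \<le> x"
    using one_minus_exp_neg_bounds[of x] T by (auto simp: x_def)
  have g: "0 \<le> 2 * \<tau> * exp (- \<tau>\<^sup>2)" "2 * \<tau> * exp (- \<tau>\<^sup>2) \<le> 2 * \<tau>"
    using True by auto
  let ?f = "(1 - exp (- x)) * (2 * \<tau> * exp (- \<tau>\<^sup>2))"
  consider "\<tau> \<le> sqrt T" | "sqrt T < \<tau>" "\<tau> \<le> 1" | "1 < \<tau>"
    by linarith
  then have "ennreal ?f \<le> ennreal (2 * \<tau>) * indicator {0..sqrt T} \<tau>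
    + ennreal (2 * T / \<tau>) * indicator {sqrt T..1} \<tau> + ennreal (2 * T * \<tau> * exp (- \<tau>\<^sup>2)) * indicator {1..} \<tau>"
  proof cases
    case 1
    have "?f \<le> 1 * (2 * \<tau>)"
      by (rule mult_mono) (use x g in auto)
    then show ?thesis
      using 1 True by (simp add: ennreal_leI add_increasing2)
  next
    case 2
    have "?f \<le> x * (2 * \<tau>)"
      by (rule mult_mono) (use x g in auto)
    also have "x * (2 * \<tau>) = 2 * T / \<tau>"
      using True by (simp add: x_def power2_eq_square field_simps)
    finally show ?thesis
      using 2 by (simp add: ennreal_leI add_increasing add_increasing2)
  next
    case 3
    have "1 \<le> \<tau> * \<tau>"
      using mult_mono[of 1 \<tau> 1 \<tau>] 3 by simp
    then have "2 * T * exp (- \<tau>\<^sup>2) * 1 \<le> 2 * T * exp (- \<tau>\<^sup>2) * (\<tau> * \<tau>)"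
      by (rule mult_left_mono) (use T in auto)
    then have "x * (2 * \<tau> * exp (- \<tau>\<^sup>2)) \<le> 2 * T * \<tau> * exp (- \<tau>\<^sup>2)"
      using True by (simp add: x_def power2_eq_square field_simps)
    moreover have "?f \<le> x * (2 * \<tau> * exp (- \<tau>\<^sup>2))"
      by (rule mult_right_mono) (use x g in auto)
    ultimately have "?f \<le> 2 * T * \<tau> * exp (- \<tau>\<^sup>2)"
      by linarith
    then show ?thesis
      using 3 by (simp add: ennreal_leI add_increasing)
  qed
  then show ?thesis
    using True by (simp add: x_def)
qed simp

lemma nn_integral_unit_product_cdf_majorant:
  assumes T: "0 < T" "T \<le> 1"
  shows "(\<integral>\<^sup>+\<tau>. ennreal (2 * \<tau>) * indicator {0..sqrt T} \<tau> + ennreal (2 * T / \<tau>) * indicator {sqrt T..1} \<tau>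
      + ennreal (2 * T * \<tau> * exp (- \<tau>\<^sup>2)) * indicator {1..} \<tau> \<partial>lborel)
    = ennreal (T + - T * ln T + T * exp (- 1))"
proof -
  have sqrt_T: "0 < sqrt T" "sqrt T \<le> 1" "(sqrt T)\<^sup>2 = T"
    using T by auto
  let ?A = "\<lambda>\<tau>. ennreal (2 * \<tau>) * indicator {0..sqrt T} \<tau>"
  let ?B = "\<lambda>\<tau>. ennreal (2 * T / \<tau>) * indicator {sqrt T..1} \<tau>"
  let ?C = "\<lambda>\<tau>. ennreal (2 * T * \<tau> * exp (- \<tau>\<^sup>2)) * indicator {1..} \<tau>"
  have "(\<integral>\<^sup>+\<tau>. ?A \<tau> + ?B \<tau> + ?C \<tau> \<partial>lborel)
      = (\<integral>\<^sup>+\<tau>. ?A \<tau> + ?B \<tau> \<partial>lborel) + (\<integral>\<^sup>+\<tau>. ?C \<tau> \<partial>lborel)"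
    by (rule nn_integral_add) measurable
  also have "(\<integral>\<^sup>+\<tau>. ?A \<tau> + ?B \<tau> \<partial>lborel) = (\<integral>\<^sup>+\<tau>. ?A \<tau> \<partial>lborel) + (\<integral>\<^sup>+\<tau>. ?B \<tau> \<partial>lborel)"
    by (rule nn_integral_add) measurable
  also have "(\<integral>\<^sup>+\<tau>. ennreal (2 * \<tau>) * indicator {0..sqrt T} \<tau> \<partial>lborel) = ennreal ((sqrt T)\<^sup>2 - 0\<^sup>2)"
    by (rule nn_integral_FTC_Icc) (use T in \<open>auto intro!: derivative_eq_intros\<close>)
  also have "(\<integral>\<^sup>+\<tau>. ennreal (2 * T / \<tau>) * indicator {sqrt T..1} \<tau> \<partial>lborel)
      = ennreal (2 * T * ln 1 - 2 * T * ln (sqrt T))"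
  proof (rule nn_integral_FTC_Icc)
    fix x
    assume "x \<in> {sqrt T..1}"
    then have "sqrt T \<le> x"
      by simp
    with sqrt_T(1) have "x > 0"
      by linarith
    then show "((\<lambda>x. 2 * T * ln x) has_real_derivative 2 * T / x) (at x)" and "0 \<le> 2 * T / x"
      using T by (auto intro!: derivative_eq_intros)
  qed (use sqrt_T in auto)
  also have "(\<integral>\<^sup>+\<tau>. ennreal (2 * T * \<tau> * exp (- \<tau>\<^sup>2)) * indicator {1..} \<tau> \<partial>lborel)
      = ennreal (0 - (- T * exp (- 1\<^sup>2)))"
  proof (rule nn_integral_FTC_atLeast)
    show "((\<lambda>x. - T * exp (- x\<^sup>2)) has_real_derivative 2 * T * x * exp (- x\<^sup>2)) (at x)" for x :: real
      by (auto intro!: derivative_eq_intros)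
    show "((\<lambda>x. - T * exp (- x\<^sup>2)) \<longlongrightarrow> 0) at_top"
      by real_asymp
  qed (use T in auto)
  also have "ennreal ((sqrt T)\<^sup>2 - 0\<^sup>2) + ennreal (2 * T * ln 1 - 2 * T * ln (sqrt T))
      + ennreal (0 - (- T * exp (- 1\<^sup>2))) = ennreal T + ennreal (- T * ln T) + ennreal (T * exp (- 1))"
    using T by (simp add: ln_sqrt)
  also have "\<dots> = ennreal (T + - T * ln T + T * exp (- 1))"
  proof -
    have "0 \<le> - T * ln T" and "0 \<le> T * exp (- 1)"
      using T by (simp_all add: mult_nonneg_nonpos)
    moreover from this have "0 \<le> T + - T * ln T"
      using T by linarith
    ultimately show ?thesis
      using T by (simp only: ennreal_plus add_nonneg_nonneg less_imp_le)
  qed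
  finally show ?thesis .
qed

lemma unit_product_cdf_le:
  assumes T: "0 < T" "T \<le> 1"
  shows "unit_product_cdf T \<le> ennreal (- T * ln T + 2 * T)"
proof -
  have "unit_product_cdf T \<le> (\<integral>\<^sup>+\<tau>. ennreal (2 * \<tau>) * indicator {0..sqrt T} \<tau>
      + ennreal (2 * T / \<tau>) * indicator {sqrt T..1} \<tau>
      + ennreal (2 * T * \<tau> * exp (- \<tau>\<^sup>2)) * indicator {1..} \<tau> \<partial>lborel)"
    unfolding unit_product_cdf_def by (intro nn_integral_mono unit_product_cdf_integrand_le T)
  also have "\<dots> = ennreal (T + - T * ln T + T * exp (- 1))"
    by (rule nn_integral_unit_product_cdf_majorant[OF T])
  also have "\<dots> \<le> ennreal (- T * ln T + 2 * T)"
    using T by (intro ennreal_leI) simp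
  finally show ?thesis .
qed

lemma unit_product_cdf_integrand_ge:
  fixes T \<tau> :: real
  assumes T: "0 < T"
  shows "ennreal (2 * T * \<tau> * (1 - \<tau>\<^sup>2) / (\<tau>\<^sup>2 + T)) * indicator {0..1} \<tau> \<le>
    ennreal ((1 - exp (- T / \<tau>\<^sup>2)) * (2 * \<tau> * exp (- \<tau>\<^sup>2))) * indicator {0<..} \<tau>"
proof (cases "0 < \<tau> \<and> \<tau> \<le> 1")
  case True
  define x where "x = T / \<tau>\<^sup>2"
  have x: "x \<ge> 0"
    using T by (simp add: x_def)
  have "x / (1 + x) \<le> 1 - exp (- x)"
    using exp_ge_add_one_self[of x] x by (simp add: exp_minus field_simps)
  moreover have "2 * \<tau> * (1 - \<tau>\<^sup>2) \<le> 2 * \<tau> * exp (- \<tau>\<^sup>2)"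
    using exp_ge_add_one_self[of "- \<tau>\<^sup>2"] True by (intro mult_left_mono) auto
  moreover have "0 \<le> 1 - exp (- x)" and "0 \<le> 2 * \<tau> * (1 - \<tau>\<^sup>2)"
    using one_minus_exp_neg_bounds[OF x] True by (auto simp: power_le_one)
  ultimately have "x / (1 + x) * (2 * \<tau> * (1 - \<tau>\<^sup>2)) \<le> (1 - exp (- x)) * (2 * \<tau> * exp (- \<tau>\<^sup>2))"
    by (rule mult_mono)
  moreover have "x / (1 + x) * (2 * \<tau> * (1 - \<tau>\<^sup>2)) = 2 * T * \<tau> * (1 - \<tau>\<^sup>2) / (\<tau>\<^sup>2 + T)"
    using True T by (simp add: x_def field_simps)
  ultimately show ?thesis
    using True by (simp add: x_def ennreal_leI)
next
  case False
  then show ?thesis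
    by (cases "\<tau> = 0") (auto simp: indicator_def)
qed

lemma unit_product_cdf_ge:
  assumes T: "0 < T" "T \<le> 1"
  shows "ennreal (- T * ln T - T) \<le> unit_product_cdf T"
proof -
  define F where "F \<tau> = T * (1 + T) * ln (\<tau>\<^sup>2 + T) - T * \<tau>\<^sup>2" for \<tau>
  have "F 1 - F 0 = T * (1 + T) * ln (1 + T) - T - T * (1 + T) * ln T"
    by (simp add: F_def add.commute)
  moreover have "0 \<le> T * (1 + T) * ln (1 + T)"
    using T by simp
  moreover have "0 \<le> - (T * T * ln T)"
    using T by (simp add: mult_nonneg_nonpos)
  ultimately have "- T * ln T - T \<le> F 1 - F 0"
    by (simp add: algebra_simps)
  then have "ennreal (- T * ln T - T) \<le> ennreal (F 1 - F 0)"
    by (rule ennreal_leI)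
  also have "ennreal (F 1 - F 0)
      = (\<integral>\<^sup>+\<tau>. ennreal (2 * T * \<tau> * (1 - \<tau>\<^sup>2) / (\<tau>\<^sup>2 + T)) * indicator {0..1} \<tau> \<partial>lborel)"
  proof (rule nn_integral_FTC_Icc[symmetric])
    fix x :: real
    assume x: "x \<in> {0..1}"
    have p: "x\<^sup>2 + T > 0"
      using T by (simp add: add_nonneg_pos)
    have "((\<lambda>x. ln (x\<^sup>2 + T)) has_real_derivative 2 * x / (x\<^sup>2 + T)) (at x)"
      using p by (auto intro!: derivative_eq_intros simp: field_simps)
    then have "(F has_real_derivative T * (1 + T) * (2 * x / (x\<^sup>2 + T)) - T * (2 * x)) (at x)"
      unfolding F_def by (intro DERIV_diff DERIV_cmult) (auto intro!: derivative_eq_intros)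
    moreover have "T * (1 + T) * (2 * x / (x\<^sup>2 + T)) - T * (2 * x) = 2 * T * x * (1 - x\<^sup>2) / (x\<^sup>2 + T)"
      using p by (simp add: field_simps)
    ultimately show "(F has_real_derivative 2 * T * x * (1 - x\<^sup>2) / (x\<^sup>2 + T)) (at x)"
      by simp
    show "0 \<le> 2 * T * x * (1 - x\<^sup>2) / (x\<^sup>2 + T)"
      using x T p by (simp add: power_le_one)
  qed auto
  also have "\<dots> \<le> unit_product_cdf T"
    unfolding unit_product_cdf_def by (intro nn_integral_mono unit_product_cdf_integrand_ge T)
  finally show ?thesis .
qed

lemma enn2real_unit_product_cdf_bounds:
  assumes T: "0 < T" "T < 1"
  shows "- T * ln T - T \<le> enn2real (unit_product_cdf T)"
    and "enn2real (unit_product_cdf T) \<le> - T * ln T + 2 * T"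
proof -
  have "0 \<le> - T * ln T"
    using T by (simp add: mult_nonneg_nonpos)
  then have "0 \<le> - T * ln T + 2 * T"
    using T by linarith
  then show "enn2real (unit_product_cdf T) \<le> - T * ln T + 2 * T"
    by (rule enn2real_leI) (use T unit_product_cdf_le[of T] in auto)
  have "unit_product_cdf T < top"
    using unit_product_cdf_le[of T] T by (simp add: le_less_trans[OF _ ennreal_less_top])
  then have "enn2real (ennreal (- T * ln T - T)) \<le> enn2real (unit_product_cdf T)"
    using T by (intro enn2real_mono unit_product_cdf_ge) auto
  then show "- T * ln T - T \<le> enn2real (unit_product_cdf T)"
  proof (cases "- T * ln T - T \<ge> 0")
    case False
    then show ?thesis
      using enn2real_nonneg[of "unit_product_cdf T"] by linarith
  qed simp
qed

lemma unit_product_cdf_asymptotic: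
  "((\<lambda>T. enn2real (unit_product_cdf T) / (- T * ln T)) \<longlongrightarrow> 1) (at_right 0)"
proof (rule tendsto_sandwich)
  have small: "\<forall>\<^sub>F T in at_right 0. 0 < T \<and> T < (1 :: real)"
    by (rule eventually_at_rightI[of 0 1]) auto
  show "\<forall>\<^sub>F T in at_right 0. 1 - 1 / (- ln T) \<le> enn2real (unit_product_cdf T) / (- T * ln T)"
    using small
  proof eventually_elim
    case (elim T)
    have "ln T < 0" "0 < - T * ln T"
      using elim by (simp_all add: mult_pos_neg)
    then have "(- T * ln T - T) / (- T * ln T) \<le> enn2real (unit_product_cdf T) / (- T * ln T)"
      using elim enn2real_unit_product_cdf_bounds(1) by (intro divide_right_mono) auto
    moreover have "(- T * ln T - T) / (- T * ln T) = 1 - 1 / (- ln T)"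
      using \<open>ln T < 0\<close> elim by (simp add: field_simps)
    ultimately show ?case
      by simp
  qed
  show "\<forall>\<^sub>F T in at_right 0. enn2real (unit_product_cdf T) / (- T * ln T) \<le> 1 + 2 / (- ln T)"
    using small
  proof eventually_elim
    case (elim T)
    have "ln T < 0" "0 < - T * ln T"
      using elim by (simp_all add: mult_pos_neg)
    then have "enn2real (unit_product_cdf T) / (- T * ln T) \<le> (- T * ln T + 2 * T) / (- T * ln T)"
      using elim enn2real_unit_product_cdf_bounds(2) by (intro divide_right_mono) auto
    moreover have "(- T * ln T + 2 * T) / (- T * ln T) = 1 + 2 / (- ln T)"
      using \<open>ln T < 0\<close> elim by (simp add: field_simps)
    ultimately show ?case
      by simp
  qed
  show "((\<lambda>T :: real. 1 - 1 / (- ln T)) \<longlongrightarrow> 1) (at_right 0)"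
      "((\<lambda>T :: real. 1 + 2 / (- ln T)) \<longlongrightarrow> 1) (at_right 0)"
    by real_asymp+
qed

lemma outage_ratio_tendsto_1:
  assumes P: "P \<ge> 1" and a: "a > 0" and b: "b > 0"
    and asym: "\<forall>\<^sub>F \<rho> in at_top. outage_asym P Q a b \<rho> \<gamma> = f \<rho> ^ P"
    and lim: "((\<lambda>\<rho>. branch_cdf Q a b (\<gamma> / \<rho>) / f \<rho>) \<longlongrightarrow> 1) at_top"
  shows "((\<lambda>\<rho>. outage P Q a b \<rho> \<gamma> / outage_asym P Q a b \<rho> \<gamma>) \<longlongrightarrow> 1) at_top"
proof -
  have "((\<lambda>\<rho>. (branch_cdf Q a b (\<gamma> / \<rho>) / f \<rho>) ^ P) \<longlongrightarrow> 1) at_top"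
    using tendsto_power[OF lim, of P] by simp
  moreover have "\<forall>\<^sub>F \<rho> in at_top. (branch_cdf Q a b (\<gamma> / \<rho>) / f \<rho>) ^ P
      = outage P Q a b \<rho> \<gamma> / outage_asym P Q a b \<rho> \<gamma>"
    using asym eventually_gt_at_top[of 0]
  proof eventually_elim
    case (elim \<rho>)
    then show ?case
      using outage_eq_branch_cdf_power[OF P a b, of \<rho> Q \<gamma>] by (simp add: power_divide)
  qed
  ultimately show ?thesis
    by (rule Lim_transform_eventually)
qed

lemma branch_cdf_ratio_tendsto_Q1:
  assumes a: "a > 0" and b: "b > 0" and \<gamma>: "\<gamma> > 0"
  shows "((\<lambda>\<rho>. branch_cdf 1 a b (\<gamma> / \<rho>)
      / (- 2 * (\<gamma> / (\<rho> * a * b)) * ln (sqrt (\<gamma> / (\<rho> * a * b))))) \<longlongrightarrow> 1) at_top"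
proof -
  define T where "T \<rho> = \<gamma> / (\<rho> * a * b)" for \<rho>
  have "filterlim T (at_right 0) at_top"
    unfolding T_def using a b \<gamma> by real_asymp
  then have "((\<lambda>\<rho>. enn2real (unit_product_cdf (T \<rho>)) / (- T \<rho> * ln (T \<rho>))) \<longlongrightarrow> 1) at_top"
    by (rule filterlim_compose[OF unit_product_cdf_asymptotic])
  moreover have "\<forall>\<^sub>F \<rho> in at_top. enn2real (unit_product_cdf (T \<rho>)) / (- T \<rho> * ln (T \<rho>))
      = branch_cdf 1 a b (\<gamma> / \<rho>) / (- 2 * T \<rho> * ln (sqrt (T \<rho>)))"
    using eventually_gt_at_top[of 0]
  proof eventually_elim
    case (elim \<rho>)
    then have "T \<rho> > 0" "\<gamma> / \<rho> / (a * b) = T \<rho>"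
      using a b \<gamma> by (simp_all add: T_def field_simps)
    moreover have "branch_cdf 1 a b (\<gamma> / \<rho>) = enn2real (unit_product_cdf (\<gamma> / \<rho> / (a * b)))"
      unfolding branch_cdf_def measure_def using emeasure_branch_1_le[OF a b, of "\<gamma> / \<rho>"] \<gamma> elim
      by simp
    ultimately show ?case
      by (simp add: ln_sqrt)
  qed
  ultimately show ?thesis
    unfolding T_def by (rule Lim_transform_eventually)
qed

lemma branch_cdf_ratio_tendsto_Q_ge2:
  assumes Q: "Q \<ge> 2" and a: "a > 0" and b: "b > 0" and \<gamma>: "\<gamma> > 0"
  shows "((\<lambda>\<rho>. branch_cdf Q a b (\<gamma> / \<rho>) / (\<gamma> / (\<rho> * real (Q - 1) * a * b))) \<longlongrightarrow> 1) at_top"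
proof -
  define K where "K = a * b * real (Q - 1)"
  have K: "K > 0"
    using a b Q by (simp add: K_def)
  have "filterlim (\<lambda>\<rho>. \<rho> / \<gamma>) at_top at_top"
    using \<gamma> by real_asymp
  then have "((\<lambda>\<rho>. \<rho> / \<gamma> * branch_cdf Q a b (1 / (\<rho> / \<gamma>))) \<longlongrightarrow> 1 / K) at_top"
    unfolding K_def by (rule filterlim_compose[OF branch_cdf_asymptotic_Q_ge2[OF Q a b]])
  then have "((\<lambda>\<rho>. \<rho> / \<gamma> * branch_cdf Q a b (1 / (\<rho> / \<gamma>)) * K) \<longlongrightarrow> 1 / K * K) at_top"
    by (intro tendsto_mult tendsto_const)
  then have "((\<lambda>\<rho>. \<rho> / \<gamma> * branch_cdf Q a b (1 / (\<rho> / \<gamma>)) * K) \<longlongrightarrow> 1) at_top"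
    using K by simp
  then show ?thesis
    by (simp add: K_def mult_ac)
qed

theorem corollary5:
  fixes P Q :: nat and \<Omega>sr \<Omega>rd R\<^sub>o\<^sub>m\<^sub>a :: real
  assumes "P \<ge> 1" and "Q \<ge> 1" and "\<Omega>sr > 0" and "\<Omega>rd > 0" and "R\<^sub>o\<^sub>m\<^sub>a > 0"
  shows "((\<lambda>\<rho>. outage P Q \<Omega>sr \<Omega>rd \<rho> (2 powr R\<^sub>o\<^sub>m\<^sub>a - 1)
                / outage_asym P Q \<Omega>sr \<Omega>rd \<rho> (2 powr R\<^sub>o\<^sub>m\<^sub>a - 1)) \<longlongrightarrow> 1) at_top"
proof -
  define \<gamma> where "\<gamma> = 2 powr R\<^sub>o\<^sub>m\<^sub>a - 1"
  have \<gamma>: "\<gamma> > 0"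
    using assms(5) by (simp add: \<gamma>_def)
  show ?thesis
    unfolding \<gamma>_def[symmetric]
  proof (rule outage_ratio_tendsto_1[OF assms(1,3,4)])
    show "\<forall>\<^sub>F \<rho> in at_top. outage_asym P Q \<Omega>sr \<Omega>rd \<rho> \<gamma> = (if Q = 1
        then - 2 * (\<gamma> / (\<rho> * \<Omega>sr * \<Omega>rd)) * ln (sqrt (\<gamma> / (\<rho> * \<Omega>sr * \<Omega>rd)))
        else \<gamma> / (\<rho> * real (Q - 1) * \<Omega>sr * \<Omega>rd)) ^ P"
      by (simp add: outage_asym_def)
    show "((\<lambda>\<rho>. branch_cdf Q \<Omega>sr \<Omega>rd (\<gamma> / \<rho>) / (if Q = 1
        then - 2 * (\<gamma> / (\<rho> * \<Omega>sr * \<Omega>rd)) * ln (sqrt (\<gamma> / (\<rho> * \<Omega>sr * \<Omega>rd)))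
        else \<gamma> / (\<rho> * real (Q - 1) * \<Omega>sr * \<Omega>rd))) \<longlongrightarrow> 1) at_top"
      using assms(2-4) \<gamma> branch_cdf_ratio_tendsto_Q1 branch_cdf_ratio_tendsto_Q_ge2
      by (cases "Q = 1") auto
  qed
qed

end
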